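(* Let $\varphi=\mathrm{vec}(A)$ and $\varphi_0=\mathrm{vec}(A_0)$ with $A,A_0\in\mathbb{R}^{(p-r)\times r}$, $\|A\|_2<1$, $\|A_0\|_2<1$. Then there exists a matrix $R_U(\varphi,\varphi_0)\in\mathbb{R}^{p\times r}$ such that $$\mathrm{vec}\{U(\varphi)-U(\varphi_0)\}=DU(\varphi_0)(\varphi-\varphi_0)+\mathrm{vec}\{R_U(\varphi,\varphi_0)\},\qquad \|R_U(\varphi,\varphi_0)\|_F\le 8\|\varphi-\varphi_0\|_2^2 .$$ Equivalently, in matrix form, $$U(\varphi)-U(\varphi_0)=2(I_p-X_{\varphi_0})^{-1}(X_\varphi-X_{\varphi_0})(I_p-X_{\varphi_0})^{-1}I_{p\times r}+R_U(\varphi,\varphi_0).$$ Moreover $\|U(\varphi)-U(\varphi_0)\|_F\le 2\sqrt2\,\|\varphi-\varphi_0\|_2$ for all such $\varphi,\varphi_0$.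
   Context: Fix integers $1\le r\le p$. For $A\in\mathbb{R}^{(p-r)\times r}$ write $\varphi=\mathrm{vec}(A)\in\mathbb{R}^{(p-r)r}$ (column-stacking vectorization), $X_\varphi=\begin{bmatrix}0_{r\times r}&-A^{T}\\ A&0_{(p-r)\times(p-r)}\end{bmatrix}$ and $I_{p\times r}=\begin{bmatrix}I_r\\0_{(p-r)\times r}\end{bmatrix}$. The Cayley parameterization is $U(\varphi)=(I_p+X_\varphi)(I_p-X_\varphi)^{-1}I_{p\times r}$, considered on the domain $\{\varphi=\mathrm{vec}(A):\|A\|_2<1\}$; it takes values in $\mathbb{O}(p,r)=\{U\in\mathbb{R}^{p\times r}:U^TU=I_r\}$, and explicitly $U(\varphi)=\begin{bmatrix}(I_r-A^TA)(I_r+A^TA)^{-1}\\ 2A(I_r+A^TA)^{-1}\end{bmatrix}$. Its derivative is $DU(\varphi)=2\,[I_{p\times r}^T(I_p-X_\varphi)^{-T}\otimes(I_p-X_\varphi)^{-1}]\,\Gamma$, where $\Gamma=(I_{p^2}-K_{pp})(\Theta_1^T\otimes\Theta_2^T)$, $\Theta_1=I_{p\times r}^T$, $\Theta_2=[0_{(p-r)\times r},I_{p-r}]$ (so that $\Gamma\varphi=\mathrm{vec}(X_\varphi)$), and $K_{pq}$ denotes the commutation matrix, $\mathrm{vec}(M^T)=K_{pq}\mathrm{vec}(M)$ for $M\in\mathbb{R}^{p\times q}$. $\|\cdot\|_2$ is the spectral (Euclidean) norm and $\|\cdot\|_F$ the Frobenius norm. *)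

theory Defs
  imports "Jordan_Normal_Form.Matrix"
begin

text \<open>Matrices are Jordan_Normal_Form matrices (explicit dimensions), since p and r vary
and p - r may be 0.\<close>

text \<open>Column-stacking vectorization: entry (i,j) of an m x n matrix goes to index i + m*j.\<close>
definition vecm :: "'a mat \<Rightarrow> 'a vec" where
  "vecm M = vec (dim_row M * dim_col M) (\<lambda>k. M $$ (k mod dim_row M, k div dim_row M))"

definition vnorm :: "real vec \<Rightarrow> real" where
  "vnorm v = sqrt (\<Sum>i<dim_vec v. (v $ i)^2)"

definition fro_norm :: "real mat \<Rightarrow> real" where
  "fro_norm M = sqrt (\<Sum>i<dim_row M. \<Sum>j<dim_col M. (M $$ (i,j))^2)"

definition spec_norm :: "real mat \<Rightarrow> real" where
  "spec_norm M = Sup {vnorm (M *\<^sub>v x) | x. x \<in> carrier_vec (dim_col M) \<and> vnorm x \<le> 1}"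

definition matinv :: "real mat \<Rightarrow> real mat" where
  "matinv M = (SOME B. B \<in> carrier_mat (dim_row M) (dim_row M) \<and> inverts_mat M B \<and> inverts_mat B M)"

text \<open>Kronecker product and commutation matrix K_{pq}: vec(M^T) = K_{pq} vec(M), M p x q.\<close>
definition kron :: "real mat \<Rightarrow> real mat \<Rightarrow> real mat" where
  "kron A B = mat (dim_row A * dim_row B) (dim_col A * dim_col B)
     (\<lambda>(i,j). A $$ (i div dim_row B, j div dim_col B) * B $$ (i mod dim_row B, j mod dim_col B))"

definition commut :: "nat \<Rightarrow> nat \<Rightarrow> real mat" where
  "commut p q = mat (p*q) (p*q) (\<lambda>(a,b). if a = b div p + q * (b mod p) then 1 else 0)"

definition Ipr :: "nat \<Rightarrow> nat \<Rightarrow> real mat" where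
  "Ipr p r = mat p r (\<lambda>(i,j). if i = j then 1 else 0)"

definition Xphi :: "nat \<Rightarrow> nat \<Rightarrow> real mat \<Rightarrow> real mat" where
  "Xphi p r A = four_block_mat (0\<^sub>m r r) (- transpose_mat A) A (0\<^sub>m (p-r) (p-r))"

definition Ucay :: "nat \<Rightarrow> nat \<Rightarrow> real mat \<Rightarrow> real mat" where
  "Ucay p r A = (1\<^sub>m p + Xphi p r A) * matinv (1\<^sub>m p - Xphi p r A) * Ipr p r"

definition Theta1 :: "nat \<Rightarrow> nat \<Rightarrow> real mat" where
  "Theta1 p r = transpose_mat (Ipr p r)"

definition Theta2 :: "nat \<Rightarrow> nat \<Rightarrow> real mat" where
  "Theta2 p r = mat (p-r) p (\<lambda>(i,j). if j = i + r then 1 else 0)"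

definition Gamma :: "nat \<Rightarrow> nat \<Rightarrow> real mat" where
  "Gamma p r = (1\<^sub>m (p*p) - commut p p) *
      kron (transpose_mat (Theta1 p r)) (transpose_mat (Theta2 p r))"

definition DU :: "nat \<Rightarrow> nat \<Rightarrow> real mat \<Rightarrow> real mat" where
  "DU p r A = 2 \<cdot>\<^sub>m (kron (transpose_mat (Ipr p r) * transpose_mat (matinv (1\<^sub>m p - Xphi p r A)))
                        (matinv (1\<^sub>m p - Xphi p r A)) * Gamma p r)"

end

theory Submission
  imports Defs "Jordan_Normal_Form.Determinant" "HOL-Analysis.Convex"
begin

text \<open>For skew-symmetric \<open>X\<close> the quadratic form of \<open>1 - X\<close> is that of the identity,
  \<open>w \<bullet> (1 - X) w = w \<bullet> w\<close>. Hence \<open>1 - X\<close> is invertible and, by Cauchy--Schwarz, its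
  inverse \<open>M\<close> is a contraction; so is \<open>M\<^sup>T\<close>, which inverts \<open>1 + X = 1 - (-X)\<close>.
  With \<open>U(\<phi>) = (2 M - 1) I\<^sub>p\<^sub>r\<close> and \<open>D = X\<^sub>\<phi> - X\<^sub>\<phi>\<^sub>0\<close>, the resolvent identity
  \<open>M - M\<^sub>0 = M D M\<^sub>0\<close> gives \<open>U(\<phi>) - U(\<phi>\<^sub>0) = 2 M D M\<^sub>0 I\<^sub>p\<^sub>r\<close>, whose linear part
  \<open>2 M\<^sub>0 D M\<^sub>0 I\<^sub>p\<^sub>r\<close> is \<open>DU(\<phi>\<^sub>0)(\<phi> - \<phi>\<^sub>0)\<close> after vectorization, leaving the remainder
  \<open>2 M D M\<^sub>0 D M\<^sub>0 I\<^sub>p\<^sub>r\<close>. Contractions do not increase the Frobenius norm and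
  \<open>\<parallel>D\<parallel>\<^sub>F = \<surd>2 \<parallel>\<phi> - \<phi>\<^sub>0\<parallel>\<close>, which yields the bounds \<open>2\<surd>2 \<parallel>\<phi> - \<phi>\<^sub>0\<parallel>\<close> and
  \<open>4 \<parallel>\<phi> - \<phi>\<^sub>0\<parallel>\<^sup>2\<close>.\<close>

lemma scalar_prod_self: "(v :: real vec) \<bullet> v = (\<Sum>i<dim_vec v. (v $ i)^2)"
  unfolding scalar_prod_def by (simp add: power2_eq_square atLeast0LessThan)

lemma vnorm_nonneg: "0 \<le> vnorm v"
  unfolding vnorm_def by (simp add: sum_nonneg)

lemma vnorm_square: "(vnorm v)^2 = v \<bullet> v"
  unfolding vnorm_def scalar_prod_self by (simp add: sum_nonneg)

lemma scalar_prod_square_le: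
  assumes "v \<in> carrier_vec n" and "w \<in> carrier_vec n"
  shows "(v \<bullet> w)^2 \<le> (v \<bullet> v) * ((w :: real vec) \<bullet> w)"
proof -
  have "v \<bullet> w = (\<Sum>i<n. v $ i * w $ i)"
    using assms unfolding scalar_prod_def by (simp add: atLeast0LessThan)
  then show ?thesis
    using Cauchy_Schwarz_ineq_sum[of "\<lambda>i. v $ i" "\<lambda>i. w $ i" "{..<n}"] assms
    unfolding scalar_prod_self by simp
qed

lemma scalar_prod_le_vnorm:
  assumes "v \<in> carrier_vec n" and "w \<in> carrier_vec n"
  shows "v \<bullet> w \<le> vnorm v * vnorm w"
proof (rule power2_le_imp_le)
  show "(v \<bullet> w)^2 \<le> (vnorm v * vnorm w)^2"
    unfolding power_mult_distrib vnorm_square by (rule scalar_prod_square_le[OF assms])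
qed (simp add: vnorm_nonneg)

lemma fro_norm_square: "(fro_norm M)^2 = (\<Sum>i<dim_row M. \<Sum>j<dim_col M. (M $$ (i,j))^2)"
  unfolding fro_norm_def by (rule real_sqrt_pow2) (simp add: sum_nonneg)

lemma fro_norm_square_cols: "(fro_norm M)^2 = (\<Sum>j<dim_col M. (vnorm (col M j))^2)"
proof -
  have "(vnorm (col M j))^2 = (\<Sum>i<dim_row M. (M $$ (i,j))^2)" if "j < dim_col M" for j
    unfolding vnorm_square scalar_prod_self using that by simp
  then show ?thesis
    unfolding fro_norm_square by (subst sum.swap) simp
qed

lemma fro_norm_nonneg: "0 \<le> fro_norm M"
  unfolding fro_norm_def by (simp add: sum_nonneg)

lemma fro_norm_transpose: "fro_norm (transpose_mat M) = fro_norm M"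
  unfolding fro_norm_def by (subst sum.swap) simp

lemma fro_norm_square_rows: "(fro_norm M)^2 = (\<Sum>i<dim_row M. (vnorm (row M i))^2)"
  using fro_norm_square_cols[of "transpose_mat M"] by (simp add: fro_norm_transpose)

lemma fro_norm_smult: "fro_norm (c \<cdot>\<^sub>m M) = \<bar>c\<bar> * fro_norm M"
proof -
  have "fro_norm (c \<cdot>\<^sub>m M) = sqrt (c^2 * (\<Sum>i<dim_row M. \<Sum>j<dim_col M. (M $$ (i,j))^2))"
    unfolding fro_norm_def by (simp add: power_mult_distrib sum_distrib_left)
  then show ?thesis unfolding real_sqrt_mult fro_norm_def by simp
qed

lemma vnorm_mult_mat_vec_le:
  assumes D: "D \<in> carrier_mat n m" and v: "v \<in> carrier_vec m"
  shows "vnorm (D *\<^sub>v v) \<le> fro_norm D * vnorm v"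
proof (rule power2_le_imp_le)
  have "(vnorm (D *\<^sub>v v))^2 = (\<Sum>i<n. (row D i \<bullet> v)^2)"
    unfolding vnorm_square scalar_prod_self using D by simp
  also have "\<dots> \<le> (\<Sum>i<n. (vnorm (row D i))^2 * (vnorm v)^2)"
    unfolding vnorm_square using D v by (intro sum_mono scalar_prod_square_le[of _ m]) auto
  also have "\<dots> = (fro_norm D * vnorm v)^2"
    unfolding fro_norm_square_rows power_mult_distrib sum_distrib_right using D by simp
  finally show "(vnorm (D *\<^sub>v v))^2 \<le> (fro_norm D * vnorm v)^2" .
qed (simp add: fro_norm_nonneg vnorm_nonneg)

lemma fro_norm_mult_le_of_vnorm_le:
  assumes N: "N \<in> carrier_mat n k" and Q: "Q \<in> carrier_mat k m" and c: "0 \<le> c"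
    and bound: "\<And>v. v \<in> carrier_vec k \<Longrightarrow> vnorm (N *\<^sub>v v) \<le> c * vnorm v"
  shows "fro_norm (N * Q) \<le> c * fro_norm Q"
proof (rule power2_le_imp_le)
  have "(fro_norm (N * Q))^2 = (\<Sum>j<m. (vnorm (N *\<^sub>v col Q j))^2)"
    unfolding fro_norm_square_cols using N Q by (intro sum.cong) (auto simp del: col_mult)
  also have "\<dots> \<le> (\<Sum>j<m. c^2 * (vnorm (col Q j))^2)"
    unfolding power_mult_distrib[symmetric] using Q
    by (intro sum_mono power_mono bound) (auto simp: vnorm_nonneg)
  also have "\<dots> = (c * fro_norm Q)^2"
    unfolding fro_norm_square_cols power_mult_distrib sum_distrib_left using Q by simp
  finally show "(fro_norm (N * Q))^2 \<le> (c * fro_norm Q)^2" .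
qed (simp add: c fro_norm_nonneg)

lemma fro_norm_mult_le:
  assumes "A \<in> carrier_mat n k" and "B \<in> carrier_mat k m"
  shows "fro_norm (A * B) \<le> fro_norm A * fro_norm B"
  using assms by (intro fro_norm_mult_le_of_vnorm_le vnorm_mult_mat_vec_le fro_norm_nonneg)

lemma fro_norm_mult_le_of_transpose_vnorm_le:
  assumes Q: "Q \<in> carrier_mat m k" and N: "N \<in> carrier_mat k n" and c: "0 \<le> c"
    and bound: "\<And>v. v \<in> carrier_vec k \<Longrightarrow> vnorm (transpose_mat N *\<^sub>v v) \<le> c * vnorm v"
  shows "fro_norm (Q * N) \<le> c * fro_norm Q"
proof -
  have "fro_norm (Q * N) = fro_norm (transpose_mat N * transpose_mat Q)"
    using transpose_mult[OF Q N] fro_norm_transpose[of "Q * N"] by simp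
  also have "\<dots> \<le> c * fro_norm Q"
    using fro_norm_mult_le_of_vnorm_le[of "transpose_mat N" n k "transpose_mat Q" m c] Q N c bound
    by (simp add: fro_norm_transpose)
  finally show ?thesis .
qed

lemma fro_norm_mult_Ipr_le:
  assumes P: "P \<in> carrier_mat k p" and "r \<le> p"
  shows "fro_norm (P * Ipr p r) \<le> fro_norm P"
proof (rule power2_le_imp_le)
  have "col (P * Ipr p r) j = col P j" if "j < r" for j
    using P that assms(2) by (intro eq_vecI) (auto simp: Ipr_def scalar_prod_def if_distrib cong: if_cong)
  then have "(fro_norm (P * Ipr p r))^2 = (\<Sum>j<r. (vnorm (col P j))^2)"
    unfolding fro_norm_square_cols by (simp add: Ipr_def)
  also have "\<dots> \<le> (\<Sum>j<p. (vnorm (col P j))^2)"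
    using assms(2) by (intro sum_mono2) auto
  finally show "(fro_norm (P * Ipr p r))^2 \<le> (fro_norm P)^2"
    unfolding fro_norm_square_cols using P by simp
qed (rule fro_norm_nonneg)

lemma mod_div_less_of_less_mult:
  assumes "k < m * (n :: nat)"
  shows "k mod m < m" and "k div m < n"
  using assms by (cases "m = 0"; auto simp: less_mult_imp_div_less mult.commute)+

lemma sum_lessThan_mult_mod_div:
  "(\<Sum>k<a * b. f (k mod a) (k div a)) = (\<Sum>j<b. \<Sum>i<(a :: nat). (f i j :: 'b :: comm_monoid_add))"
proof -
  have index_less: "i + a * j < a * b" if "i < a" "j < b" for i j
  proof -
    have "i + j * a < Suc j * a" using that by simp
    also have "\<dots> \<le> b * a" using that by (intro mult_right_mono) auto
    finally show ?thesis by (simp add: mult.commute add.commute)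
  qed
  have "(\<Sum>k<a * b. f (k mod a) (k div a)) = (\<Sum>(i,j)\<in>{..<a} \<times> {..<b}. f i j)"
    by (rule sum.reindex_bij_witness[where i = "\<lambda>(i,j). i + a * j" and j = "\<lambda>k. (k mod a, k div a)"])
      (auto simp: mod_div_less_of_less_mult index_less)
  also have "\<dots> = (\<Sum>i<a. \<Sum>j<b. f i j)"
    by (rule sum.cartesian_product[symmetric])
  also have "\<dots> = (\<Sum>j<b. \<Sum>i<a. f i j)"
    by (rule sum.swap)
  finally show ?thesis .
qed

lemma dim_vecm [simp]: "dim_vec (vecm M) = dim_row M * dim_col M"
  unfolding vecm_def by simp

lemma vecm_carrier: "M \<in> carrier_mat m n \<Longrightarrow> vecm M \<in> carrier_vec (m * n)"
  unfolding vecm_def by auto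

lemma index_vecm: "M \<in> carrier_mat m n \<Longrightarrow> k < m * n \<Longrightarrow> vecm M $ k = M $$ (k mod m, k div m)"
  unfolding vecm_def by auto

lemma vecm_add:
  "P \<in> carrier_mat m n \<Longrightarrow> Q \<in> carrier_mat m n \<Longrightarrow> vecm (P + Q) = vecm P + vecm Q"
  by (intro eq_vecI) (auto simp: vecm_def mod_div_less_of_less_mult)

lemma vecm_minus:
  "P \<in> carrier_mat m n \<Longrightarrow> Q \<in> carrier_mat m n \<Longrightarrow> vecm (P - Q) = vecm P - vecm Q"
  by (intro eq_vecI) (auto simp: vecm_def mod_div_less_of_less_mult)

lemma vecm_smult: "P \<in> carrier_mat m n \<Longrightarrow> vecm (c \<cdot>\<^sub>m P) = c \<cdot>\<^sub>v vecm P"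
  by (intro eq_vecI) (auto simp: vecm_def mod_div_less_of_less_mult)

lemma vnorm_vecm: "vnorm (vecm M) = fro_norm M"
  unfolding vnorm_def fro_norm_def vecm_def
  by (simp add: sum_lessThan_mult_mod_div[of "\<lambda>i j. (M $$ (i,j))^2"] sum.swap[of _ "{..<dim_row M}"])

lemma kron_mult_vecm:
  assumes B: "B \<in> carrier_mat nb mb" and C: "C \<in> carrier_mat nc mc" and Y: "Y \<in> carrier_mat mc mb"
  shows "kron B C *\<^sub>v vecm Y = vecm (C * Y * transpose_mat B)"
proof (rule eq_vecI)
  fix i assume "i < dim_vec (vecm (C * Y * transpose_mat B))"
  then have i: "i < nc * nb" using B C by (simp add: vecm_def)
  note i_bounds = mod_div_less_of_less_mult[OF i]
  have "(kron B C *\<^sub>v vecm Y) $ i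
      = (\<Sum>k<mc * mb. B $$ (i div nc, k div mc) * C $$ (i mod nc, k mod mc) * Y $$ (k mod mc, k div mc))"
    using B C Y i
    by (auto simp: kron_def scalar_prod_def atLeast0LessThan index_vecm mod_div_less_of_less_mult
        mult.commute intro!: sum.cong)
  also have "\<dots> = (\<Sum>l<mb. \<Sum>j<mc. B $$ (i div nc, l) * C $$ (i mod nc, j) * Y $$ (j, l))"
    by (rule sum_lessThan_mult_mod_div)
  also have "\<dots> = vecm (C * Y * transpose_mat B) $ i"
    using B C Y i i_bounds
    by (simp add: index_vecm[of _ nc nb] scalar_prod_def atLeast0LessThan sum_distrib_left
        sum_distrib_right sum.swap[of _ "{..<mb}"] mult_ac)
  finally show "(kron B C *\<^sub>v vecm Y) $ i = vecm (C * Y * transpose_mat B) $ i" .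
qed (use B C in \<open>simp add: kron_def vecm_def\<close>)

lemma commut_mult_vecm:
  assumes Y: "Y \<in> carrier_mat p q"
  shows "commut p q *\<^sub>v vecm Y = vecm (transpose_mat Y)"
proof (rule eq_vecI)
  fix a assume "a < dim_vec (vecm (transpose_mat Y))"
  then have a: "a < q * p" using Y by (simp add: vecm_def)
  note a_bounds = mod_div_less_of_less_mult[OF a]
  have "(commut p q *\<^sub>v vecm Y) $ a
      = (\<Sum>b<p * q. (if a = b div p + q * (b mod p) then Y $$ (b mod p, b div p) else 0))"
    using Y a
    by (auto simp: commut_def scalar_prod_def atLeast0LessThan index_vecm mult.commute intro!: sum.cong)
  also have "\<dots> = (\<Sum>k<q. \<Sum>l<p. (if a = k + q * l then Y $$ (l, k) else 0))"
    by (rule sum_lessThan_mult_mod_div)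
  also have "\<dots> = (\<Sum>k<q. if k = a mod q then Y $$ (a div q, k) else 0)"
  proof (intro sum.cong refl)
    fix k assume "k \<in> {..<q}"
    then have "a = k + q * l \<longleftrightarrow> k = a mod q \<and> l = a div q" for l
      by auto
    then show "(\<Sum>l<p. (if a = k + q * l then Y $$ (l, k) else 0)) = (if k = a mod q then Y $$ (a div q, k) else 0)"
      using a_bounds by (simp cong: if_cong)
  qed
  also have "\<dots> = vecm (transpose_mat Y) $ a"
    using Y a a_bounds by (simp add: index_vecm[of _ q p])
  finally show "(commut p q *\<^sub>v vecm Y) $ a = vecm (transpose_mat Y) $ a" .
qed (use Y in \<open>simp add: commut_def vecm_def mult.commute\<close>)

lemma scalar_prod_skew_mult_self:
  fixes X :: "real mat"
  assumes X: "X \<in> carrier_mat n n" and skew: "transpose_mat X = - X" and w: "w \<in> carrier_vec n"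
  shows "w \<bullet> (X *\<^sub>v w) = 0"
proof -
  have "w \<bullet> (X *\<^sub>v w) = (transpose_mat X *\<^sub>v w) \<bullet> w"
    by (rule transpose_vec_mult_scalar[OF X w w, symmetric])
  also have "\<dots> = - (w \<bullet> (X *\<^sub>v w))"
    using X w by (simp add: skew comm_scalar_prod[of _ n w])
  finally show ?thesis by simp
qed

lemma vnorm_le_one_minus_skew_mult:
  fixes X :: "real mat"
  assumes X: "X \<in> carrier_mat n n" and skew: "transpose_mat X = - X" and w: "w \<in> carrier_vec n"
  shows "vnorm w \<le> vnorm ((1\<^sub>m n - X) *\<^sub>v w)"
proof -
  define v where "v = (1\<^sub>m n - X) *\<^sub>v w"
  have v: "v \<in> carrier_vec n"
    unfolding v_def by (rule mult_mat_vec_carrier[OF minus_carrier_mat[OF X] w])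
  have "w \<bullet> v = w \<bullet> w - w \<bullet> (X *\<^sub>v w)"
    unfolding v_def using X w
    by (simp add: minus_mult_distrib_mat_vec[OF one_carrier_mat X w] scalar_prod_minus_distrib[of _ n])
  then have "(vnorm w)^2 = w \<bullet> v"
    unfolding vnorm_square scalar_prod_skew_mult_self[OF X skew w] by simp
  also have "\<dots> \<le> vnorm w * vnorm v"
    by (rule scalar_prod_le_vnorm[OF w v])
  finally have "vnorm w * vnorm w \<le> vnorm w * vnorm v"
    by (simp add: power2_eq_square)
  then show ?thesis
    unfolding v_def using vnorm_nonneg[of w] by (cases "vnorm w = 0") (auto simp: vnorm_nonneg)
qed

lemma vnorm_right_inverse_one_minus_skew_le:
  fixes X :: "real mat"
  assumes X: "X \<in> carrier_mat n n" and skew: "transpose_mat X = - X"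
    and N: "N \<in> carrier_mat n n" and inv: "(1\<^sub>m n - X) * N = 1\<^sub>m n" and v: "v \<in> carrier_vec n"
  shows "vnorm (N *\<^sub>v v) \<le> vnorm v"
proof -
  have "(1\<^sub>m n - X) *\<^sub>v (N *\<^sub>v v) = v"
    using assoc_mult_mat_vec[of "1\<^sub>m n - X" n n N n v] X N v by (simp add: inv minus_carrier_mat)
  then show ?thesis
    using vnorm_le_one_minus_skew_mult[OF X skew, of "N *\<^sub>v v"] N v by simp
qed

lemma matinv_one_minus_skew:
  fixes X :: "real mat"
  assumes X: "X \<in> carrier_mat n n" and skew: "transpose_mat X = - X"
  shows "matinv (1\<^sub>m n - X) \<in> carrier_mat n n"
    and "(1\<^sub>m n - X) * matinv (1\<^sub>m n - X) = 1\<^sub>m n"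
    and "matinv (1\<^sub>m n - X) * (1\<^sub>m n - X) = 1\<^sub>m n"
proof -
  have T: "1\<^sub>m n - X \<in> carrier_mat n n" using X by (rule minus_carrier_mat)
  have "det (1\<^sub>m n - X) \<noteq> 0"
  proof
    assume "det (1\<^sub>m n - X) = 0"
    then obtain w where w: "w \<in> carrier_vec n" "w \<noteq> 0\<^sub>v n" "(1\<^sub>m n - X) *\<^sub>v w = 0\<^sub>v n"
      using det_0_iff_vec_prod_zero[OF T] by auto
    have "vnorm w \<le> 0"
      using vnorm_le_one_minus_skew_mult[OF X skew w(1)] w(3) by (simp add: vnorm_def)
    then have "(\<Sum>i<n. (w $ i)^2) = 0"
      using w(1) unfolding vnorm_def by (simp add: antisym sum_nonneg)
    then have "w = 0\<^sub>v n"
      using w(1) by (intro eq_vecI) (auto simp: sum_nonneg_eq_0_iff)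
    with w(2) show False ..
  qed
  then obtain B where B: "B \<in> carrier_mat n n" "B * (1\<^sub>m n - X) = 1\<^sub>m n" "(1\<^sub>m n - X) * B = 1\<^sub>m n"
    using det_non_zero_imp_unit[OF T] unfolding Units_def ring_mat_def by auto
  then have "\<exists>B. B \<in> carrier_mat (dim_row (1\<^sub>m n - X)) (dim_row (1\<^sub>m n - X))
      \<and> inverts_mat (1\<^sub>m n - X) B \<and> inverts_mat B (1\<^sub>m n - X)"
    using T X unfolding inverts_mat_def by auto
  from someI_ex[OF this]
  show "matinv (1\<^sub>m n - X) \<in> carrier_mat n n"
    and "(1\<^sub>m n - X) * matinv (1\<^sub>m n - X) = 1\<^sub>m n"
    and "matinv (1\<^sub>m n - X) * (1\<^sub>m n - X) = 1\<^sub>m n"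
    using T unfolding matinv_def inverts_mat_def by auto
qed

lemma vnorm_matinv_one_minus_skew_le:
  fixes X :: "real mat"
  assumes X: "X \<in> carrier_mat n n" and skew: "transpose_mat X = - X" and v: "v \<in> carrier_vec n"
  shows "vnorm (matinv (1\<^sub>m n - X) *\<^sub>v v) \<le> vnorm v"
    and "vnorm (transpose_mat (matinv (1\<^sub>m n - X)) *\<^sub>v v) \<le> vnorm v"
proof -
  note M = matinv_one_minus_skew[OF X skew]
  show "vnorm (matinv (1\<^sub>m n - X) *\<^sub>v v) \<le> vnorm v"
    by (rule vnorm_right_inverse_one_minus_skew_le[OF X skew M(1,2) v])
  have "transpose_mat (1\<^sub>m n - X) = 1\<^sub>m n - (- X)"
    using X by (simp add: transpose_minus[of _ n n] skew)
  then have "(1\<^sub>m n - (- X)) * transpose_mat (matinv (1\<^sub>m n - X))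
      = transpose_mat (matinv (1\<^sub>m n - X) * (1\<^sub>m n - X))"
    using X M(1) transpose_mult[of "matinv (1\<^sub>m n - X)" n n "1\<^sub>m n - X" n]
    by (simp add: minus_carrier_mat)
  also have "\<dots> = 1\<^sub>m n" by (simp add: M(3))
  finally show "vnorm (transpose_mat (matinv (1\<^sub>m n - X)) *\<^sub>v v) \<le> vnorm v"
    using X M(1) v skew
    by (intro vnorm_right_inverse_one_minus_skew_le[of "- X"]) (auto simp: transpose_uminus)
qed

lemma one_plus_mult_right_inverse:
  fixes X N :: "real mat"
  assumes X: "X \<in> carrier_mat n n" and N: "N \<in> carrier_mat n n" and inv: "(1\<^sub>m n - X) * N = 1\<^sub>m n"
  shows "(1\<^sub>m n + X) * N = 2 \<cdot>\<^sub>m N - 1\<^sub>m n"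
proof -
  have "1\<^sub>m n + X = 2 \<cdot>\<^sub>m 1\<^sub>m n - (1\<^sub>m n - X)"
    using X by (intro eq_matI) auto
  then have "(1\<^sub>m n + X) * N = (2 \<cdot>\<^sub>m 1\<^sub>m n) * N - (1\<^sub>m n - X) * N"
    using X N by (simp add: minus_mult_distrib_mat[of _ n n] minus_carrier_mat)
  also have "\<dots> = 2 \<cdot>\<^sub>m N - 1\<^sub>m n"
    using N by (simp add: inv mult_smult_assoc_mat[of "1\<^sub>m n" n n N n])
  finally show ?thesis .
qed

lemma resolvent_identity:
  fixes M M0 X X0 :: "real mat"
  assumes X: "X \<in> carrier_mat n n" and X0: "X0 \<in> carrier_mat n n"
    and M: "M \<in> carrier_mat n n" and M0: "M0 \<in> carrier_mat n n"
    and inv: "M * (1\<^sub>m n - X) = 1\<^sub>m n" and inv0: "(1\<^sub>m n - X0) * M0 = 1\<^sub>m n"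
  shows "M - M0 = M * (X - X0) * M0"
proof -
  have T: "1\<^sub>m n - X \<in> carrier_mat n n" and T0: "1\<^sub>m n - X0 \<in> carrier_mat n n"
    using X X0 by (auto intro: minus_carrier_mat)
  have "X - X0 = (1\<^sub>m n - X0) - (1\<^sub>m n - X)"
    using X X0 by (intro eq_matI) auto
  then have "M * (X - X0) * M0 = (M * (1\<^sub>m n - X0) - M * (1\<^sub>m n - X)) * M0"
    using mult_minus_distrib_mat[OF M T0 T] by simp
  also have "\<dots> = M * ((1\<^sub>m n - X0) * M0) - M * (1\<^sub>m n - X) * M0"
    using M M0 T T0 by (simp add: minus_mult_distrib_mat[of _ n n] assoc_mult_mat[of _ n n _ n _ n])
  also have "\<dots> = M - M0"
    using M M0 by (simp add: inv inv0)
  finally show ?thesis by simp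
qed

text \<open>Both remainders are products \<open>M (X - X\<^sub>0) M\<^sub>0\<close> and \<open>(M - M\<^sub>0) (X - X\<^sub>0) M\<^sub>0\<close> by the
  resolvent identity, and multiplying by \<open>M\<close> on the left or by \<open>M\<^sub>0\<close> on the right does not
  increase the Frobenius norm.\<close>
lemma matinv_one_minus_skew_diff_le:
  fixes X X0 :: "real mat"
  assumes X: "X \<in> carrier_mat n n" and skew: "transpose_mat X = - X"
    and X0: "X0 \<in> carrier_mat n n" and skew0: "transpose_mat X0 = - X0"
  defines "M \<equiv> matinv (1\<^sub>m n - X)" and "M0 \<equiv> matinv (1\<^sub>m n - X0)"
  shows "fro_norm (M - M0) \<le> fro_norm (X - X0)"
    and "fro_norm (M - M0 - M0 * (X - X0) * M0) \<le> (fro_norm (X - X0))^2"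
proof -
  note Mp = matinv_one_minus_skew[OF X skew, folded M_def]
  note M0p = matinv_one_minus_skew[OF X0 skew0, folded M0_def]
  note contr = vnorm_matinv_one_minus_skew_le[OF X skew, folded M_def]
  note contr0 = vnorm_matinv_one_minus_skew_le[OF X0 skew0, folded M0_def]
  define D where "D = X - X0"
  have D: "D \<in> carrier_mat n n" unfolding D_def by (rule minus_carrier_mat[OF X0])
  have diff: "M - M0 = M * D * M0"
    unfolding D_def by (rule resolvent_identity[OF X X0 Mp(1) M0p(1) Mp(3) M0p(2)])
  have "fro_norm (M * D * M0) \<le> 1 * fro_norm (M * D)"
    using Mp(1) D M0p(1) contr0(2) by (intro fro_norm_mult_le_of_transpose_vnorm_le[of _ n n]) auto
  also have "\<dots> \<le> 1 * fro_norm D"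
    using Mp(1) D contr(1) fro_norm_mult_le_of_vnorm_le[of M n n D n 1] by simp
  finally show first: "fro_norm (M - M0) \<le> fro_norm (X - X0)"
    unfolding diff D_def by simp
  have "(M - M0) * D * M0 = M - M0 - M0 * D * M0"
    using Mp(1) M0p(1) D by (simp add: minus_mult_distrib_mat[of _ n n] flip: diff)
  then have "fro_norm (M - M0 - M0 * D * M0) = fro_norm ((M - M0) * D * M0)"
    by simp
  also have "\<dots> \<le> 1 * fro_norm ((M - M0) * D)"
    using Mp(1) D M0p(1) contr0(2) by (intro fro_norm_mult_le_of_transpose_vnorm_le[of _ n n]) auto
  also have "\<dots> \<le> fro_norm (M - M0) * fro_norm D"
    using Mp(1) M0p(1) D by (simp add: fro_norm_mult_le[of _ n n] minus_carrier_mat)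
  also have "\<dots> \<le> fro_norm D * fro_norm D"
    using first unfolding D_def by (intro mult_right_mono fro_norm_nonneg)
  finally show "fro_norm (M - M0 - M0 * (X - X0) * M0) \<le> (fro_norm (X - X0))^2"
    unfolding D_def by (simp add: power2_eq_square)
qed

lemma sum_lessThan_split_at:
  assumes "r \<le> (p :: nat)"
  shows "(\<Sum>i<p. f i) = (\<Sum>i<r. f i) + (\<Sum>i<p - r. (f (i + r) :: 'b :: comm_monoid_add))"
  using sum.atLeastLessThan_concat[of 0 r p f] sum.shift_bounds_nat_ivl[of f 0 r "p - r"] assms
  by (simp add: atLeast0LessThan)

lemma Xphi_carrier: "A \<in> carrier_mat (p - r) r \<Longrightarrow> r \<le> p \<Longrightarrow> Xphi p r A \<in> carrier_mat p p"
  unfolding Xphi_def by auto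

lemma index_Xphi:
  assumes "A \<in> carrier_mat (p - r) r" "r \<le> p" "i < p" "j < p"
  shows "Xphi p r A $$ (i,j) = (if i < r then (if j < r then 0 else - A $$ (j - r, i))
                                  else (if j < r then A $$ (i - r, j) else 0))"
  using assms unfolding Xphi_def by (auto simp: index_mat_four_block)

lemma transpose_Xphi:
  assumes "A \<in> carrier_mat (p - r) r" "r \<le> p"
  shows "transpose_mat (Xphi p r A) = - Xphi p r A"
proof (rule eq_matI)
  fix i j assume "i < dim_row (- Xphi p r A)" "j < dim_col (- Xphi p r A)"
  then have "i < p" "j < p" using Xphi_carrier[OF assms] by auto
  then show "transpose_mat (Xphi p r A) $$ (i,j) = (- Xphi p r A) $$ (i,j)"
    using Xphi_carrier[OF assms] by (simp add: index_Xphi[OF assms])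
qed (use Xphi_carrier[OF assms] in auto)

lemma Xphi_diff:
  assumes A: "A \<in> carrier_mat (p - r) r" and A0: "A0 \<in> carrier_mat (p - r) r" and rp: "r \<le> p"
  shows "Xphi p r A - Xphi p r A0 = Xphi p r (A - A0)"
proof (rule eq_matI)
  have D: "A - A0 \<in> carrier_mat (p - r) r" using A0 by (rule minus_carrier_mat)
  fix i j assume "i < dim_row (Xphi p r (A - A0))" "j < dim_col (Xphi p r (A - A0))"
  then have ij: "i < p" "j < p" using Xphi_carrier[OF D rp] by auto
  then show "(Xphi p r A - Xphi p r A0) $$ (i,j) = Xphi p r (A - A0) $$ (i,j)"
    using Xphi_carrier[OF A rp] Xphi_carrier[OF A0 rp] A A0
    by (simp add: index_Xphi[OF A rp ij] index_Xphi[OF A0 rp ij] index_Xphi[OF D rp ij])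
qed (use Xphi_carrier[OF A rp] Xphi_carrier[OF A0 rp] Xphi_carrier[OF minus_carrier_mat[OF A0, of A] rp]
    in auto)

lemma fro_norm_Xphi:
  assumes A: "A \<in> carrier_mat (p - r) r" and rp: "r \<le> p"
  shows "fro_norm (Xphi p r A) = sqrt 2 * fro_norm A"
proof -
  have "(fro_norm (Xphi p r A))^2 = (\<Sum>i<p. \<Sum>j<p. (Xphi p r A $$ (i,j))^2)"
    unfolding fro_norm_square using Xphi_carrier[OF A rp] by simp
  also have "\<dots> = (\<Sum>i<r. \<Sum>j<p - r. (A $$ (j,i))^2) + (\<Sum>i<p - r. \<Sum>j<r. (A $$ (i,j))^2)"
    using A rp by (simp add: sum_lessThan_split_at[OF rp] index_Xphi)
  also have "\<dots> = (sqrt 2 * fro_norm A)^2"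
    unfolding power_mult_distrib fro_norm_square using A by (simp add: sum.swap[of _ "{..<r}"])
  finally show ?thesis
    using fro_norm_nonneg by (simp add: power2_eq_iff_nonneg)
qed

lemma transpose_Theta2_mult:
  assumes B: "B \<in> carrier_mat (p - r) m"
  shows "transpose_mat (Theta2 p r) * B = mat p m (\<lambda>(i,k). if r \<le> i then B $$ (i - r, k) else 0)"
proof (rule eq_matI)
  fix i k assume "i < dim_row (mat p m (\<lambda>(i,k). if r \<le> i then B $$ (i - r, k) else 0))"
    and "k < dim_col (mat p m (\<lambda>(i,k). if r \<le> i then B $$ (i - r, k) else 0))"
  then have i: "i < p" and k: "k < m" by auto
  have "(transpose_mat (Theta2 p r) * B) $$ (i,k) = (\<Sum>l<p - r. (if l = i - r \<and> r \<le> i then B $$ (l,k) else 0))"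
    using i k B by (auto simp: Theta2_def scalar_prod_def atLeast0LessThan intro!: sum.cong)
  also have "\<dots> = (if r \<le> i then B $$ (i - r, k) else 0)"
    using i by (auto simp: if_distrib cong: if_cong)
  finally show "(transpose_mat (Theta2 p r) * B) $$ (i,k)
      = mat p m (\<lambda>(i,k). if r \<le> i then B $$ (i - r, k) else 0) $$ (i,k)"
    using i k by simp
qed (use B in \<open>auto simp: Theta2_def\<close>)

lemma transpose_Theta2_mult_transpose_Ipr:
  assumes B: "B \<in> carrier_mat (p - r) r"
  shows "transpose_mat (Theta2 p r) * B * transpose_mat (Ipr p r)
    = mat p p (\<lambda>(i,j). if r \<le> i \<and> j < r then B $$ (i - r, j) else 0)"
    (is "?Y = ?block")
proof (rule eq_matI)
  fix i j assume "i < dim_row ?block" and "j < dim_col ?block"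
  then have i: "i < p" and j: "j < p" by auto
  have "?Y $$ (i,j) = (\<Sum>k<r. if k = j \<and> r \<le> i then B $$ (i - r, k) else 0)"
    unfolding transpose_Theta2_mult[OF B] using i j
    by (auto simp: Ipr_def scalar_prod_def atLeast0LessThan intro!: sum.cong)
  then show "?Y $$ (i,j) = ?block $$ (i,j)"
    using i j by auto
qed (auto simp: Theta2_def Ipr_def)

text \<open>\<open>\<Theta>\<^sub>2\<^sup>T B \<Theta>\<^sub>1\<close> places \<open>B\<close> in the lower left block; \<open>\<Gamma>\<close> then subtracts its transpose.\<close>
lemma Gamma_mult_vecm:
  assumes B: "B \<in> carrier_mat (p - r) r" and rp: "r \<le> p"
  shows "Gamma p r *\<^sub>v vecm B = vecm (Xphi p r B)"
proof -
  define Y where "Y = transpose_mat (Theta2 p r) * B * transpose_mat (Ipr p r)"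
  have Y_eq: "Y = mat p p (\<lambda>(i,j). if r \<le> i \<and> j < r then B $$ (i - r, j) else 0)"
    unfolding Y_def by (rule transpose_Theta2_mult_transpose_Ipr[OF B])
  have Y: "Y \<in> carrier_mat p p" unfolding Y_eq by simp
  have I: "Ipr p r \<in> carrier_mat p r" and T2: "transpose_mat (Theta2 p r) \<in> carrier_mat p (p - r)"
    unfolding Ipr_def Theta2_def by simp_all
  have K: "kron (Ipr p r) (transpose_mat (Theta2 p r)) \<in> carrier_mat (p * p) ((p - r) * r)"
    using I T2 unfolding kron_def by (simp add: mult.commute)
  have C: "commut p p \<in> carrier_mat (p * p) (p * p)" unfolding commut_def by simp
  have "Gamma p r *\<^sub>v vecm B
      = (1\<^sub>m (p * p) - commut p p) *\<^sub>v (kron (Ipr p r) (transpose_mat (Theta2 p r)) *\<^sub>v vecm B)"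
    unfolding Gamma_def Theta1_def transpose_transpose
    using C by (intro assoc_mult_mat_vec[OF _ K vecm_carrier[OF B]]) (auto intro: minus_carrier_mat)
  also have "\<dots> = vecm Y - commut p p *\<^sub>v vecm Y"
    unfolding kron_mult_vecm[OF I T2 B, folded Y_def]
    using minus_mult_distrib_mat_vec[OF one_carrier_mat C vecm_carrier[OF Y]] vecm_carrier[OF Y] by simp
  also have "\<dots> = vecm (Y - transpose_mat Y)"
    unfolding commut_mult_vecm[OF Y] using Y by (simp add: vecm_minus)
  also have "Y - transpose_mat Y = Xphi p r B"
    using Y Xphi_carrier[OF B rp] unfolding Y_eq by (intro eq_matI) (auto simp: index_Xphi[OF B rp])
  finally show ?thesis .
qed

lemma smult_mat_mult_mat_vec:
  "v \<in> carrier_vec (dim_col A) \<Longrightarrow> (c \<cdot>\<^sub>m A) *\<^sub>v v = c \<cdot>\<^sub>v (A *\<^sub>v (v :: 'a :: comm_ring vec))"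
  by (intro eq_vecI) auto

lemma DU_mult_vecm:
  assumes A0: "A0 \<in> carrier_mat (p - r) r" and B: "B \<in> carrier_mat (p - r) r" and rp: "r \<le> p"
  defines "M0 \<equiv> matinv (1\<^sub>m p - Xphi p r A0)"
  shows "DU p r A0 *\<^sub>v vecm B = vecm (2 \<cdot>\<^sub>m (M0 * Xphi p r B * M0 * Ipr p r))"
proof -
  have M0: "M0 \<in> carrier_mat p p"
    unfolding M0_def by (rule matinv_one_minus_skew(1)[OF Xphi_carrier[OF A0 rp] transpose_Xphi[OF A0 rp]])
  have I: "Ipr p r \<in> carrier_mat p r" unfolding Ipr_def by simp
  define L where "L = transpose_mat (Ipr p r) * transpose_mat M0"
  have L: "L \<in> carrier_mat r p" unfolding L_def using I M0 by simp
  have LT: "transpose_mat L = M0 * Ipr p r"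
    unfolding L_def using transpose_mult[of "transpose_mat (Ipr p r)" r p "transpose_mat M0" p] I M0 by simp
  have K: "kron L M0 \<in> carrier_mat (r * p) (p * p)" using L M0 unfolding kron_def by simp
  have G: "Gamma p r \<in> carrier_mat (p * p) ((p - r) * r)"
    unfolding Gamma_def
    by (rule mult_carrier_mat[OF minus_carrier_mat])
      (auto simp: commut_def kron_def Theta1_def Theta2_def Ipr_def mult.commute)
  have XB: "Xphi p r B \<in> carrier_mat p p" by (rule Xphi_carrier[OF B rp])
  have "DU p r A0 *\<^sub>v vecm B = 2 \<cdot>\<^sub>v (kron L M0 *\<^sub>v (Gamma p r *\<^sub>v vecm B))"
    unfolding DU_def M0_def[symmetric] L_def[symmetric] using K G vecm_carrier[OF B]
    by (simp add: smult_mat_mult_mat_vec assoc_mult_mat_vec[OF K G])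
  also have "\<dots> = 2 \<cdot>\<^sub>v vecm (M0 * Xphi p r B * M0 * Ipr p r)"
    unfolding Gamma_mult_vecm[OF B rp] kron_mult_vecm[OF L M0 XB] LT
    using M0 XB I by (simp add: assoc_mult_mat[of _ p p _ p _ r])
  also have "\<dots> = vecm (2 \<cdot>\<^sub>m (M0 * Xphi p r B * M0 * Ipr p r))"
    using mult_carrier_mat[OF mult_carrier_mat[OF mult_carrier_mat[OF M0 XB] M0] I]
    by (rule vecm_smult[symmetric])
  finally show ?thesis .
qed

lemma Ucay_carrier: "A \<in> carrier_mat (p - r) r \<Longrightarrow> r \<le> p \<Longrightarrow> Ucay p r A \<in> carrier_mat p r"
  using Xphi_carrier[of A p r] unfolding Ucay_def Ipr_def carrier_mat_def by simp

lemma Ucay_eq_matinv: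
  assumes A: "A \<in> carrier_mat (p - r) r" and rp: "r \<le> p"
  shows "Ucay p r A = (2 \<cdot>\<^sub>m matinv (1\<^sub>m p - Xphi p r A) - 1\<^sub>m p) * Ipr p r"
proof -
  note X = Xphi_carrier[OF A rp]
  note M = matinv_one_minus_skew[OF X transpose_Xphi[OF A rp]]
  show ?thesis
    unfolding Ucay_def one_plus_mult_right_inverse[OF X M(1,2)] ..
qed

lemma Ucay_diff:
  assumes A: "A \<in> carrier_mat (p - r) r" and A0: "A0 \<in> carrier_mat (p - r) r" and rp: "r \<le> p"
  shows "Ucay p r A - Ucay p r A0
    = 2 \<cdot>\<^sub>m ((matinv (1\<^sub>m p - Xphi p r A) - matinv (1\<^sub>m p - Xphi p r A0)) * Ipr p r)"
proof -
  define M where "M = matinv (1\<^sub>m p - Xphi p r A)"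
  define M0 where "M0 = matinv (1\<^sub>m p - Xphi p r A0)"
  have M: "M \<in> carrier_mat p p" and M0: "M0 \<in> carrier_mat p p"
    unfolding M_def M0_def
    by (intro matinv_one_minus_skew(1) Xphi_carrier transpose_Xphi A A0 rp)+
  have I: "Ipr p r \<in> carrier_mat p r" unfolding Ipr_def by simp
  have "(2 \<cdot>\<^sub>m M - 1\<^sub>m p) * Ipr p r - (2 \<cdot>\<^sub>m M0 - 1\<^sub>m p) * Ipr p r
      = ((2 \<cdot>\<^sub>m M - 1\<^sub>m p) - (2 \<cdot>\<^sub>m M0 - 1\<^sub>m p)) * Ipr p r"
    using M M0 I by (simp add: minus_mult_distrib_mat[of _ p p] minus_carrier_mat)
  also have "(2 \<cdot>\<^sub>m M - 1\<^sub>m p) - (2 \<cdot>\<^sub>m M0 - 1\<^sub>m p) = 2 \<cdot>\<^sub>m (M - M0)"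
    using M M0 by (intro eq_matI) auto
  also have "(2 \<cdot>\<^sub>m (M - M0)) * Ipr p r = 2 \<cdot>\<^sub>m ((M - M0) * Ipr p r)"
    using M M0 I by (simp add: mult_smult_assoc_mat[of _ p p] minus_carrier_mat)
  finally show ?thesis
    unfolding Ucay_eq_matinv[OF A rp] Ucay_eq_matinv[OF A0 rp] M_def M0_def .
qed

lemma fro_norm_Xphi_diff:
  assumes A: "A \<in> carrier_mat (p - r) r" and A0: "A0 \<in> carrier_mat (p - r) r" and rp: "r \<le> p"
  shows "fro_norm (Xphi p r A - Xphi p r A0) = sqrt 2 * vnorm (vecm A - vecm A0)"
  unfolding Xphi_diff[OF A A0 rp] fro_norm_Xphi[OF minus_carrier_mat[OF A0] rp]
    vecm_minus[OF A A0, symmetric] vnorm_vecm ..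

lemma fro_norm_Ucay_diff_le:
  assumes A: "A \<in> carrier_mat (p - r) r" and A0: "A0 \<in> carrier_mat (p - r) r" and rp: "r \<le> p"
  shows "fro_norm (Ucay p r A - Ucay p r A0) \<le> 2 * fro_norm (Xphi p r A - Xphi p r A0)"
proof -
  note X = Xphi_carrier[OF A rp] and X0 = Xphi_carrier[OF A0 rp]
  define M where "M = matinv (1\<^sub>m p - Xphi p r A)"
  define M0 where "M0 = matinv (1\<^sub>m p - Xphi p r A0)"
  have "M0 \<in> carrier_mat p p"
    unfolding M0_def by (rule matinv_one_minus_skew(1)[OF X0 transpose_Xphi[OF A0 rp]])
  then have "fro_norm ((M - M0) * Ipr p r) \<le> fro_norm (M - M0)"
    by (intro fro_norm_mult_Ipr_le[OF _ rp] minus_carrier_mat)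
  also have "\<dots> \<le> fro_norm (Xphi p r A - Xphi p r A0)"
    unfolding M_def M0_def
    by (rule matinv_one_minus_skew_diff_le(1)[OF X transpose_Xphi[OF A rp] X0 transpose_Xphi[OF A0 rp]])
  finally show ?thesis
    unfolding Ucay_diff[OF A A0 rp, folded M_def M0_def] fro_norm_smult by simp
qed

lemma fro_norm_Ucay_remainder_le:
  assumes A: "A \<in> carrier_mat (p - r) r" and A0: "A0 \<in> carrier_mat (p - r) r" and rp: "r \<le> p"
  defines "M0 \<equiv> matinv (1\<^sub>m p - Xphi p r A0)" and "D \<equiv> Xphi p r A - Xphi p r A0"
  shows "fro_norm (Ucay p r A - Ucay p r A0 - 2 \<cdot>\<^sub>m (M0 * D * M0 * Ipr p r)) \<le> 2 * (fro_norm D)^2"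
proof -
  note X = Xphi_carrier[OF A rp] and X0 = Xphi_carrier[OF A0 rp]
  define M where "M = matinv (1\<^sub>m p - Xphi p r A)"
  have M: "M \<in> carrier_mat p p" and M0: "M0 \<in> carrier_mat p p"
    unfolding M_def M0_def by (intro matinv_one_minus_skew(1) transpose_Xphi X X0 A A0 rp)+
  have D: "D \<in> carrier_mat p p" unfolding D_def by (rule minus_carrier_mat[OF X0])
  have I: "Ipr p r \<in> carrier_mat p r" unfolding Ipr_def by simp
  have "Ucay p r A - Ucay p r A0 - 2 \<cdot>\<^sub>m (M0 * D * M0 * Ipr p r)
      = 2 \<cdot>\<^sub>m ((M - M0 - M0 * D * M0) * Ipr p r)"
    unfolding Ucay_diff[OF A A0 rp, folded M_def M0_def]
    using M M0 D I by (intro eq_matI) (auto simp: minus_mult_distrib_mat[of _ p p] minus_carrier_mat)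
  also have "fro_norm \<dots> \<le> 2 * fro_norm (M - M0 - M0 * D * M0)"
    unfolding fro_norm_smult
    using fro_norm_mult_Ipr_le[OF minus_carrier_mat[OF mult_carrier_mat[OF mult_carrier_mat[OF M0 D] M0]] rp]
    by simp
  also have "\<dots> \<le> 2 * (fro_norm D)^2"
    using matinv_one_minus_skew_diff_le(2)[OF X transpose_Xphi[OF A rp] X0 transpose_Xphi[OF A0 rp]]
    unfolding M_def M0_def D_def by simp
  finally show ?thesis .
qed

theorem theorem1:
  fixes p r :: nat and A A0 :: "real mat"
  assumes "1 \<le> r" and "r \<le> p"
    and "A \<in> carrier_mat (p - r) r" and "A0 \<in> carrier_mat (p - r) r"
    and "spec_norm A < 1" and "spec_norm A0 < 1"
  shows "(\<exists>R \<in> carrier_mat p r.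
            vecm (Ucay p r A - Ucay p r A0) = DU p r A0 *\<^sub>v (vecm A - vecm A0) + vecm R
          \<and> fro_norm R \<le> 8 * (vnorm (vecm A - vecm A0))^2
          \<and> Ucay p r A - Ucay p r A0 =
              2 \<cdot>\<^sub>m (matinv (1\<^sub>m p - Xphi p r A0) * (Xphi p r A - Xphi p r A0)
                     * matinv (1\<^sub>m p - Xphi p r A0) * Ipr p r) + R)
       \<and> fro_norm (Ucay p r A - Ucay p r A0) \<le> 2 * sqrt 2 * vnorm (vecm A - vecm A0)"
proof -
  note rp = assms(2) and A = assms(3) and A0 = assms(4)
  define M0 where "M0 = matinv (1\<^sub>m p - Xphi p r A0)"
  define D where "D = Xphi p r A - Xphi p r A0"
  define E where "E = 2 \<cdot>\<^sub>m (M0 * D * M0 * Ipr p r)"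
  define R where "R = Ucay p r A - Ucay p r A0 - E"
  have "M0 \<in> carrier_mat p p"
    unfolding M0_def by (rule matinv_one_minus_skew(1)[OF Xphi_carrier[OF A0 rp] transpose_Xphi[OF A0 rp]])
  then have E: "E \<in> carrier_mat p r"
    unfolding E_def Ipr_def carrier_mat_def by simp
  have R: "R \<in> carrier_mat p r" unfolding R_def by (rule minus_carrier_mat[OF E])
  have expansion: "Ucay p r A - Ucay p r A0 = E + R"
    unfolding R_def using E Ucay_carrier[OF A0 rp] by (intro eq_matI) auto
  have "vecm E = DU p r A0 *\<^sub>v (vecm A - vecm A0)"
    unfolding vecm_minus[OF A A0, symmetric] DU_mult_vecm[OF A0 minus_carrier_mat[OF A0] rp]
      E_def D_def M0_def Xphi_diff[OF A A0 rp] ..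
  then have vec_expansion: "vecm (Ucay p r A - Ucay p r A0) = DU p r A0 *\<^sub>v (vecm A - vecm A0) + vecm R"
    unfolding expansion vecm_add[OF E R] by simp
  have "fro_norm R \<le> 2 * (fro_norm D)^2"
    using fro_norm_Ucay_remainder_le[OF A A0 rp] unfolding R_def E_def M0_def D_def .
  also have "\<dots> = 4 * (vnorm (vecm A - vecm A0))^2"
    unfolding D_def fro_norm_Xphi_diff[OF A A0 rp] by (simp add: power_mult_distrib)
  also have "\<dots> \<le> 8 * (vnorm (vecm A - vecm A0))^2"
    by simp
  finally have fro_R: "fro_norm R \<le> 8 * (vnorm (vecm A - vecm A0))^2" .
  have fro_U: "fro_norm (Ucay p r A - Ucay p r A0) \<le> 2 * sqrt 2 * vnorm (vecm A - vecm A0)"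
    using fro_norm_Ucay_diff_le[OF A A0 rp] unfolding fro_norm_Xphi_diff[OF A A0 rp] by simp
  show ?thesis
    using vec_expansion fro_R expansion fro_U R unfolding E_def D_def M0_def by blast
qed

end
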